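(* Let $\gamma > 1$ satisfy $\gamma(\gamma - 1)^2 > 1$, and let $I$ be a $\gamma$-stable instance of the metric Steiner tree problem with optimal Steiner tree $\mathrm{OPT}$. Let $H$ be a subgraph of $\mathrm{OPT}$ with at least two vertices, let $ab$ be an edge of $H$, and let $c \in V(\mathrm{OPT}) \setminus V(H)$. Then $w_{ca} < \frac{1}{\gamma - 1} w_{ab}$ if and only if $ca$ is an edge of $\mathrm{OPT}$.
   Context: An instance of the metric Steiner tree problem consists of a finite set $V$ of points of a metric space with metric $d$, a set $T \subseteq V$ of terminals, and the complete graph on $V$ with edge weights $w_{uv} = d(u,v)$. Points of $V \setminus T$ are Steiner points. A Steiner tree is a tree in this complete graph whose vertex set contains all of $T$; its weight is the sum of its edge weights. For $\gamma > 1$, the instance is $\gamma$-stable if it has a minimum-weight Steiner tree $\mathrm{OPT}$ such that for every $w' : V \times V \to \mathbb{R}_{\ge 0}$ with $w_{uv} \le w'_{uv} \le \gamma w_{uv}$ for all $u,v$, every minimum-weight Steiner tree with respect to $w'$ equals $\mathrm{OPT}$. $V(\mathrm{OPT})$ and $V(H)$ denote vertex sets. *)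

theory Defs
  imports Complex_Main
begin

definition metric_on :: "'a set \<Rightarrow> ('a \<Rightarrow> 'a \<Rightarrow> real) \<Rightarrow> bool" where
  "metric_on V d \<longleftrightarrow>
     (\<forall>u\<in>V. \<forall>v\<in>V. d u v \<ge> 0 \<and> (d u v = 0 \<longleftrightarrow> u = v) \<and> d u v = d v u) \<and>
     (\<forall>u\<in>V. \<forall>v\<in>V. \<forall>x\<in>V. d u v \<le> d u x + d x v)"

definition edges_on :: "'a set \<Rightarrow> 'a set set" where
  "edges_on W = {e. \<exists>u v. u \<in> W \<and> v \<in> W \<and> u \<noteq> v \<and> e = {u, v}}"

definition edge_w :: "('a \<Rightarrow> 'a \<Rightarrow> real) \<Rightarrow> 'a set \<Rightarrow> real" where
  "edge_w d e = (THE r. \<exists>u v. e = {u, v} \<and> u \<noteq> v \<and> r = d u v)"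

definition is_tree :: "'a set \<times> 'a set set \<Rightarrow> bool" where
  "is_tree G \<longleftrightarrow> (let W = fst G; E = snd G in
     finite W \<and> W \<noteq> {} \<and> E \<subseteq> edges_on W \<and>
     (\<forall>u\<in>W. \<forall>v\<in>W. (u, v) \<in> {(x, y). {x, y} \<in> E}\<^sup>*) \<and>
     card E = card W - 1)"

definition steiner_tree :: "'a set \<Rightarrow> 'a set \<Rightarrow> 'a set \<times> 'a set set \<Rightarrow> bool" where
  "steiner_tree V T G \<longleftrightarrow> is_tree G \<and> fst G \<subseteq> V \<and> T \<subseteq> fst G"

definition tree_weight :: "('a set \<Rightarrow> real) \<Rightarrow> 'a set \<times> 'a set set \<Rightarrow> real" where
  "tree_weight c G = (\<Sum>e\<in>snd G. c e)"

definition min_steiner_tree ::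
  "'a set \<Rightarrow> 'a set \<Rightarrow> ('a set \<Rightarrow> real) \<Rightarrow> 'a set \<times> 'a set set \<Rightarrow> bool" where
  "min_steiner_tree V T c G \<longleftrightarrow> steiner_tree V T G \<and>
     (\<forall>G'. steiner_tree V T G' \<longrightarrow> tree_weight c G \<le> tree_weight c G')"

definition gamma_perturbation ::
  "'a set \<Rightarrow> ('a \<Rightarrow> 'a \<Rightarrow> real) \<Rightarrow> real \<Rightarrow> ('a set \<Rightarrow> real) \<Rightarrow> bool" where
  "gamma_perturbation V d \<gamma> w' \<longleftrightarrow>
     (\<forall>e\<in>edges_on V. edge_w d e \<le> w' e \<and> w' e \<le> \<gamma> * edge_w d e)"

definition stable_with_opt ::
  "'a set \<Rightarrow> 'a set \<Rightarrow> ('a \<Rightarrow> 'a \<Rightarrow> real) \<Rightarrow> real \<Rightarrow> 'a set \<times> 'a set set \<Rightarrow> bool" where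
  "stable_with_opt V T d \<gamma> OPT \<longleftrightarrow>
     min_steiner_tree V T (edge_w d) OPT \<and>
     (\<forall>w'. gamma_perturbation V d \<gamma> w' \<longrightarrow>
        (\<forall>G. min_steiner_tree V T w' G \<longrightarrow> G = OPT))"

end

theory Submission
  imports Defs
begin

text \<open>Stability makes every edge exchange in \<open>OPT\<close> strictly unprofitable: if \<open>uv\<close> is an
  edge of \<open>OPT\<close> and \<open>pq\<close> reconnects the two components of \<open>OPT - uv\<close>, then raising the
  weights of the edges of \<open>OPT\<close> by the factor \<open>\<gamma>\<close> keeps \<open>OPT\<close> the unique optimum, so the
  exchanged tree is strictly more expensive, i.e. \<open>\<gamma> w(uv) < w(pq)\<close>.

  If \<open>ca\<close> is an edge of \<open>OPT\<close>, exchanging it for \<open>cb\<close> and the triangle inequality give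
  \<open>(\<gamma> - 1) w(ca) < w(ab)\<close>. If it is not, let \<open>xa\<close> be the last edge of the path from \<open>c\<close>
  to \<open>a\<close> in \<open>OPT\<close>. Exchanging \<open>xa\<close> for \<open>ca\<close> gives \<open>\<gamma> w(xa) < w(ca)\<close>, and unless
  \<open>x = b\<close>, exchanging \<open>ab\<close> for \<open>xb\<close> gives \<open>(\<gamma> - 1) w(ab) < w(xa)\<close>. Combining,
  \<open>w(ab) \<le> (\<gamma> - 1) w(ca)\<close> because \<open>\<gamma> (\<gamma> - 1)\<^sup>2 > 1\<close>.\<close>

definition adj :: "'a set set \<Rightarrow> ('a \<times> 'a) set" where
  "adj E = {(x, y). {x, y} \<in> E}"

lemma sym_adj: "sym (adj E)"
  unfolding adj_def by (auto intro: symI simp: insert_commute)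

lemma adj_rtrancl_sym: "(x, y) \<in> (adj E)\<^sup>* \<Longrightarrow> (y, x) \<in> (adj E)\<^sup>*"
  using sym_rtrancl[OF sym_adj] by (rule symD)

lemma adj_rtrancl_mono: "E \<subseteq> F \<Longrightarrow> (adj E)\<^sup>* \<subseteq> (adj F)\<^sup>*"
  by (rule rtrancl_mono) (auto simp: adj_def)

lemma is_tree_iff:
  "is_tree (W, E) \<longleftrightarrow> finite W \<and> W \<noteq> {} \<and> E \<subseteq> edges_on W \<and>
     (\<forall>u\<in>W. \<forall>v\<in>W. (u, v) \<in> (adj E)\<^sup>*) \<and> card E = card W - 1"
  by (simp add: is_tree_def adj_def)

lemma edges_onD: "{u, v} \<in> edges_on W \<Longrightarrow> u \<in> W \<and> v \<in> W \<and> u \<noteq> v"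
  unfolding edges_on_def by (auto simp: doubleton_eq_iff)

lemma edges_on_mono: "W \<subseteq> V \<Longrightarrow> edges_on W \<subseteq> edges_on V"
  unfolding edges_on_def by blast

lemma finite_edges_on: "finite W \<Longrightarrow> finite (edges_on W)"
  by (rule finite_subset[of _ "Pow W"]) (auto simp: edges_on_def)

lemma adj_rtrancl_in_vertices:
  assumes "E \<subseteq> edges_on W" "(p, u) \<in> (adj E)\<^sup>*" "u \<in> W"
  shows "p \<in> W"
  using assms(2)
proof (cases rule: converse_rtranclE)
  case base
  with assms(3) show ?thesis
    by simp
next
  case (step y)
  then have "{p, y} \<in> E"
    unfolding adj_def by simp
  with assms(1) have "{p, y} \<in> edges_on W"
    by blast
  from edges_onD[OF this] show ?thesis
    by blast
qed

lemma card_edges_ge_if_connected: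
  assumes "finite W" "E \<subseteq> edges_on W" "r \<in> W" "\<forall>w\<in>W. (w, r) \<in> (adj E)\<^sup>*"
  shows "card W - 1 \<le> card E"
proof -
  define dist where "dist w = (LEAST n. (w, r) \<in> adj E ^^ n)" for w
  have "\<forall>w\<in>W - {r}. \<exists>y. {w, y} \<in> E \<and> dist y < dist w"
  proof
    fix w assume w: "w \<in> W - {r}"
    with assms(4) have "(w, r) \<in> (adj E)\<^sup>*"
      by blast
    then obtain n where "(w, r) \<in> adj E ^^ n"
      unfolding rtrancl_power by blast
    then have path: "(w, r) \<in> adj E ^^ dist w"
      unfolding dist_def by (rule LeastI)
    have "dist w \<noteq> 0"
    proof
      assume "dist w = 0"
      with path w show False
        by simp
    qed
    then obtain m where m: "dist w = Suc m"
      using not0_implies_Suc by blast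
    from path[unfolded m] have "\<exists>y. (w, y) \<in> adj E \<and> (y, r) \<in> adj E ^^ m"
      by (rule relpow_Suc_D2)
    then obtain y where "(w, y) \<in> adj E" "(y, r) \<in> adj E ^^ m"
      by blast
    moreover from this(2) have "dist y \<le> m"
      unfolding dist_def by (rule Least_le)
    ultimately show "\<exists>y. {w, y} \<in> E \<and> dist y < dist w"
      using m unfolding adj_def by auto
  qed
  then obtain parent
    where parent: "\<And>w. w \<in> W - {r} \<Longrightarrow> {w, parent w} \<in> E \<and> dist (parent w) < dist w"
    by (metis bchoice)
  have "inj_on (\<lambda>w. {w, parent w}) (W - {r})"
  proof (rule inj_onI)
    fix w w' assume w: "w \<in> W - {r}" and w': "w' \<in> W - {r}"
      and eq: "{w, parent w} = {w', parent w'}"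
    show "w = w'"
    proof (rule ccontr)
      assume "w \<noteq> w'"
      with eq have "parent w = w'" "parent w' = w"
        by (auto simp: doubleton_eq_iff)
      then have "dist w' < dist w" "dist w < dist w'"
        using parent[OF w] parent[OF w'] by metis+
      then show False
        by simp
    qed
  qed
  moreover have "(\<lambda>w. {w, parent w}) ` (W - {r}) \<subseteq> E"
    using parent by auto
  moreover have "finite E"
    using assms(1,2) finite_edges_on finite_subset by blast
  ultimately have "card (W - {r}) \<le> card E"
    by (rule card_inj_on_le)
  then show ?thesis
    using assms(1,3) by simp
qed

lemma adj_rtrancl_Diff_edge:
  assumes "(w, u) \<in> (adj E)\<^sup>*"
  shows "(w, u) \<in> (adj (E - {{u, v}}))\<^sup>* \<or> (w, v) \<in> (adj (E - {{u, v}}))\<^sup>*"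
  using assms
proof (induction rule: converse_rtrancl_induct)
  case base
  then show ?case by simp
next
  case (step y z)
  show ?case
  proof (cases "{y, z} = {u, v}")
    case True
    then show ?thesis by (auto simp: doubleton_eq_iff)
  next
    case False
    with step.hyps(1) have "(y, z) \<in> adj (E - {{u, v}})"
      by (simp add: adj_def)
    with step.IH show ?thesis
      by (meson converse_rtrancl_into_rtrancl)
  qed
qed

lemma tree_edge_separates:
  assumes "is_tree (W, E)" "{u, v} \<in> E"
  shows "(u, v) \<notin> (adj (E - {{u, v}}))\<^sup>*"
proof
  assume uv: "(u, v) \<in> (adj (E - {{u, v}}))\<^sup>*"
  from assms(1) have tree: "finite W" "E \<subseteq> edges_on W"
    "\<forall>x\<in>W. \<forall>y\<in>W. (x, y) \<in> (adj E)\<^sup>*" "card E = card W - 1"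
    by (auto simp: is_tree_iff)
  from assms(2) tree(2) have u: "u \<in> W" and v: "v \<in> W" and "u \<noteq> v"
    using edges_onD[of u v W] by blast+
  have "(w, u) \<in> (adj (E - {{u, v}}))\<^sup>*" if "w \<in> W" for w
    using adj_rtrancl_Diff_edge[of w u E v] tree(3) that u
      rtrancl_trans[OF _ adj_rtrancl_sym[OF uv], of w]
    by blast
  then have "card W - 1 \<le> card (E - {{u, v}})"
    using card_edges_ge_if_connected[OF tree(1) _ u] tree(2) by blast
  moreover have "finite E"
    using tree(1,2) finite_edges_on finite_subset by blast
  moreover have "card W \<ge> 2"
    using card_mono[OF tree(1), of "{u, v}"] u v \<open>u \<noteq> v\<close> by simp
  ultimately show False
    using tree(4) assms(2) by simp
qed

lemma tree_sides_separated:
  assumes "is_tree (W, E)" "{u, v} \<in> E"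
    and "(p, u) \<in> (adj (E - {{u, v}}))\<^sup>*" "(q, v) \<in> (adj (E - {{u, v}}))\<^sup>*"
  shows "(p, q) \<notin> (adj (E - {{u, v}}))\<^sup>*"
proof
  assume "(p, q) \<in> (adj (E - {{u, v}}))\<^sup>*"
  with assms(3,4) have "(u, v) \<in> (adj (E - {{u, v}}))\<^sup>*"
    by (meson adj_rtrancl_sym rtrancl_trans)
  with tree_edge_separates[OF assms(1,2)] show False ..
qed

lemma tree_exchange:
  assumes "is_tree (W, E)" "{u, v} \<in> E"
    and "(p, u) \<in> (adj (E - {{u, v}}))\<^sup>*" "(q, v) \<in> (adj (E - {{u, v}}))\<^sup>*"
  shows "is_tree (W, insert {p, q} (E - {{u, v}}))"
proof -
  define D where "D = E - {{u, v}}"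
  define F where "F = insert {p, q} D"
  from assms(1) have tree: "finite W" "W \<noteq> {}" "E \<subseteq> edges_on W"
    "\<forall>x\<in>W. \<forall>y\<in>W. (x, y) \<in> (adj E)\<^sup>*" "card E = card W - 1"
    by (auto simp: is_tree_iff)
  from assms(2) tree(3) have u: "u \<in> W" and v: "v \<in> W"
    using edges_onD[of u v W] by blast+
  have D_edges: "D \<subseteq> edges_on W"
    using tree(3) by (auto simp: D_def)
  have p: "p \<in> W" and q: "q \<in> W"
    using adj_rtrancl_in_vertices[OF D_edges] assms(3,4) u v by (auto simp: D_def)
  have "(p, q) \<notin> (adj D)\<^sup>*"
    unfolding D_def by (rule tree_sides_separated[OF assms])
  then have "p \<noteq> q" and new: "{p, q} \<notin> D"
    by (auto simp: adj_def)
  have D_F: "(adj D)\<^sup>* \<subseteq> (adj F)\<^sup>*"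
    by (rule adj_rtrancl_mono) (auto simp: F_def)
  have "(p, q) \<in> adj F"
    by (simp add: adj_def F_def)
  then have "(u, v) \<in> (adj F)\<^sup>*"
    using D_F adj_rtrancl_sym[OF assms(3)[folded D_def]] assms(4)[folded D_def]
    by (meson r_into_rtrancl rtrancl_trans subsetD)
  then have to_u: "(w, u) \<in> (adj F)\<^sup>*" if "w \<in> W" for w
    using adj_rtrancl_Diff_edge[of w u E v] tree(4) that u D_F adj_rtrancl_sym
    unfolding D_def by (meson rtrancl_trans subsetD)
  have "\<forall>x\<in>W. \<forall>y\<in>W. (x, y) \<in> (adj F)\<^sup>*"
    using to_u adj_rtrancl_sym rtrancl_trans by meson
  moreover have "F \<subseteq> edges_on W"
    using D_edges p q \<open>p \<noteq> q\<close> by (auto simp: F_def edges_on_def)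
  moreover have "finite E"
    using tree(1,3) finite_edges_on finite_subset by blast
  then have "card F = card E"
    using new assms(2) card_gt_0_iff[of E] by (auto simp: F_def D_def)
  ultimately show ?thesis
    using tree(1,2,5) by (simp add: is_tree_iff F_def D_def)
qed

lemma adj_rtrancl_last_edge:
  assumes "(c, a) \<in> (adj E)\<^sup>*" "c \<noteq> a"
  shows "\<exists>x. {x, a} \<in> E \<and> (c, x) \<in> (adj (E - {{x, a}}))\<^sup>*"
proof -
  define D where "D = {e \<in> E. a \<notin> e}"
  have "y = a \<or> (\<exists>x. {x, a} \<in> E \<and> (y, x) \<in> (adj D)\<^sup>*)" if "(y, a) \<in> (adj E)\<^sup>*" for y
    using that
  proof (induction rule: converse_rtrancl_induct)
    case base
    then show ?case by simp
  next
    case (step y z)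
    then have yz: "{y, z} \<in> E"
      by (simp add: adj_def)
    show ?case
    proof (cases "a \<in> {y, z}")
      case True
      with yz show ?thesis
        by (auto simp: insert_commute)
    next
      case False
      with yz have "(y, z) \<in> adj D"
        by (simp add: adj_def D_def)
      with step.IH False show ?thesis
        by (meson converse_rtrancl_into_rtrancl insertCI)
    qed
  qed
  with assms obtain x where "{x, a} \<in> E" "(c, x) \<in> (adj D)\<^sup>*"
    by blast
  moreover have "D \<subseteq> E - {{x, a}}"
    by (auto simp: D_def)
  ultimately show ?thesis
    using adj_rtrancl_mono by blast
qed

lemma steiner_tree_edges_on:
  assumes "steiner_tree V T (W, E)"
  shows "E \<subseteq> edges_on V"
  using assms edges_on_mono by (fastforce simp: steiner_tree_def is_tree_iff)

lemma stable_with_opt_steiner_tree: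
  "stable_with_opt V T d \<gamma> OPT \<Longrightarrow> steiner_tree V T OPT"
  by (simp add: stable_with_opt_def min_steiner_tree_def)

lemma edge_w_eq:
  assumes "metric_on V d" "x \<in> V" "y \<in> V" "x \<noteq> y"
  shows "edge_w d {x, y} = d x y"
  unfolding edge_w_def
proof (rule the_equality)
  fix r assume "\<exists>u v. {x, y} = {u, v} \<and> u \<noteq> v \<and> r = d u v"
  then obtain u v where "{x, y} = {u, v}" "r = d u v"
    by blast
  with assms show "r = d x y"
    unfolding metric_on_def by (auto simp: doubleton_eq_iff)
qed (use assms(4) in blast)

lemma edge_w_nonneg:
  assumes "metric_on V d" "e \<in> edges_on V"
  shows "edge_w d e \<ge> 0"
proof -
  from assms(2) obtain x y where "x \<in> V" "y \<in> V" "x \<noteq> y" "e = {x, y}"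
    unfolding edges_on_def by blast
  with assms(1) show ?thesis
    using edge_w_eq[OF assms(1)] unfolding metric_on_def by auto
qed

lemma finite_steiner_trees:
  assumes "finite V"
  shows "finite {G. steiner_tree V T G}"
proof (rule finite_subset)
  show "{G. steiner_tree V T G} \<subseteq> Pow V \<times> Pow (edges_on V)"
  proof
    fix G assume "G \<in> {G. steiner_tree V T G}"
    then have "fst G \<subseteq> V" "snd G \<subseteq> edges_on (fst G)"
      by (auto simp: steiner_tree_def is_tree_def Let_def)
    moreover have "edges_on (fst G) \<subseteq> edges_on V"
      using \<open>fst G \<subseteq> V\<close> by (rule edges_on_mono)
    ultimately show "G \<in> Pow V \<times> Pow (edges_on V)"
      by (cases G) auto
  qed
  show "finite (Pow V \<times> Pow (edges_on V))"
    using assms finite_edges_on by blast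
qed

lemma min_steiner_tree_exists:
  assumes "finite V" "steiner_tree V T G"
  shows "\<exists>G0. min_steiner_tree V T c G0"
proof -
  let ?S = "{G. steiner_tree V T G}"
  have "finite ?S" "?S \<noteq> {}"
    using finite_steiner_trees[OF assms(1)] assms(2) by blast+
  from arg_min_if_finite[OF this, of "tree_weight c"]
  show ?thesis
    unfolding min_steiner_tree_def by (metis mem_Collect_eq not_le)
qed

lemma stable_opt_strictly_cheaper:
  assumes "finite V" "stable_with_opt V T d \<gamma> OPT" "gamma_perturbation V d \<gamma> w'"
    and "steiner_tree V T G" "G \<noteq> OPT"
  shows "tree_weight w' OPT < tree_weight w' G"
proof -
  have unique: "G' = OPT" if "min_steiner_tree V T w' G'" for G'
    using assms(2,3) that unfolding stable_with_opt_def by blast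
  obtain G0 where "min_steiner_tree V T w' G0"
    using min_steiner_tree_exists[OF assms(1,4)] by blast
  then have opt_min: "min_steiner_tree V T w' OPT"
    using unique by blast
  show ?thesis
  proof (rule ccontr)
    assume "\<not> ?thesis"
    with opt_min assms(4) have "min_steiner_tree V T w' G"
      unfolding min_steiner_tree_def by force
    with unique assms(5) show False
      by blast
  qed
qed

lemma gamma_perturbation_scale:
  assumes "metric_on V d" "\<gamma> \<ge> 1"
  shows "gamma_perturbation V d \<gamma> (\<lambda>e. if e \<in> E then \<gamma> * edge_w d e else edge_w d e)"
  unfolding gamma_perturbation_def
proof (intro ballI)
  fix e assume "e \<in> edges_on V"
  then have "edge_w d e \<ge> 0"
    by (rule edge_w_nonneg[OF assms(1)])
  with assms(2) have "edge_w d e \<le> \<gamma> * edge_w d e"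
    by (simp add: mult_le_cancel_right1)
  then show "edge_w d e \<le> (if e \<in> E then \<gamma> * edge_w d e else edge_w d e) \<and>
      (if e \<in> E then \<gamma> * edge_w d e else edge_w d e) \<le> \<gamma> * edge_w d e"
    by simp
qed

lemma stable_exchange_bound:
  assumes "finite V" "metric_on V d" "\<gamma> \<ge> 1" "stable_with_opt V T d \<gamma> (W, E)"
    and "{u, v} \<in> E" "{p, q} \<noteq> {u, v}"
    and "(p, u) \<in> (adj (E - {{u, v}}))\<^sup>*" "(q, v) \<in> (adj (E - {{u, v}}))\<^sup>*"
  shows "\<gamma> * d u v < d p q"
proof -
  define D where "D = E - {{u, v}}"
  define w' where "w' e = (if e \<in> E then \<gamma> * edge_w d e else edge_w d e)" for e
  have opt: "steiner_tree V T (W, E)"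
    using assms(4) by (rule stable_with_opt_steiner_tree)
  then have tree: "is_tree (W, E)" and "W \<subseteq> V"
    by (auto simp: steiner_tree_def)
  have E_edges: "E \<subseteq> edges_on V"
    using opt by (rule steiner_tree_edges_on)
  then have "finite E"
    using finite_edges_on[OF assms(1)] finite_subset by blast
  have exchanged: "is_tree (W, insert {p, q} D)"
    unfolding D_def by (rule tree_exchange[OF tree assms(5,7,8)])
  then have "{p, q} \<in> edges_on W"
    by (simp add: is_tree_iff)
  then have pq: "{p, q} \<in> edges_on V"
    using edges_on_mono[OF \<open>W \<subseteq> V\<close>] by blast
  have "(p, q) \<notin> (adj D)\<^sup>*"
    unfolding D_def by (rule tree_sides_separated[OF tree assms(5,7,8)])
  then have new: "{p, q} \<notin> D"
    by (auto simp: adj_def)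
  with assms(6) have "{p, q} \<notin> E"
    by (simp add: D_def)
  have "{u, v} \<notin> insert {p, q} D"
    using assms(6) by (simp add: D_def)
  with assms(5) have "(W, insert {p, q} D) \<noteq> (W, E)"
    by blast
  moreover have "steiner_tree V T (W, insert {p, q} D)"
    using exchanged opt by (simp add: steiner_tree_def)
  ultimately have "tree_weight w' (W, E) < tree_weight w' (W, insert {p, q} D)"
    using stable_opt_strictly_cheaper[OF assms(1,4)] gamma_perturbation_scale[OF assms(2,3)]
    unfolding w'_def by blast
  moreover have "tree_weight w' (W, E) = \<gamma> * edge_w d {u, v} + sum w' D"
    using \<open>finite E\<close> assms(5) by (simp add: tree_weight_def D_def w'_def sum.remove)
  moreover have "tree_weight w' (W, insert {p, q} D) = edge_w d {p, q} + sum w' D"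
    using \<open>finite E\<close> new \<open>{p, q} \<notin> E\<close> by (simp add: tree_weight_def D_def w'_def)
  moreover have "edge_w d {u, v} = d u v" "edge_w d {p, q} = d p q"
    using assms(5) E_edges pq edge_w_eq[OF assms(2)] edges_onD[of u v V] edges_onD[of p q V]
    by blast+
  ultimately show ?thesis
    by simp
qed

lemma stable_opt_edge_short:
  assumes "finite V" "metric_on V d" "\<gamma> \<ge> 1" "stable_with_opt V T d \<gamma> (W, E)"
    and "{c, a} \<in> E" "{a, b} \<in> E" "b \<noteq> c"
  shows "(\<gamma> - 1) * d c a < d a b"
proof -
  have "E \<subseteq> edges_on V"
    using assms(4) stable_with_opt_steiner_tree steiner_tree_edges_on by blast
  with assms(5,6) have "c \<in> V" "a \<in> V" "b \<in> V" "a \<noteq> b"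
    using edges_onD[of c a V] edges_onD[of a b V] by blast+
  have "{a, b} \<in> E - {{c, a}}"
    using assms(6,7) by (auto simp: doubleton_eq_iff)
  then have "(b, a) \<in> (adj (E - {{c, a}}))\<^sup>*"
    by (simp add: adj_def insert_commute r_into_rtrancl)
  moreover have "{c, b} \<noteq> {c, a}"
    using \<open>a \<noteq> b\<close> by (auto simp: doubleton_eq_iff)
  ultimately have "\<gamma> * d c a < d c b"
    using stable_exchange_bound[OF assms(1-5), of c b] by blast
  moreover have "d c b \<le> d c a + d a b"
    using assms(2) \<open>c \<in> V\<close> \<open>a \<in> V\<close> \<open>b \<in> V\<close> unfolding metric_on_def by blast
  ultimately show ?thesis
    by (simp add: algebra_simps)
qed

lemma gamma_times_pred_ge_one:
  fixes \<gamma> :: real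
  assumes "\<gamma> > 1" "\<gamma> * (\<gamma> - 1)^2 > 1"
  shows "\<gamma> * (\<gamma> - 1) \<ge> 1"
proof (cases "\<gamma> \<ge> 2")
  case True
  then have "\<gamma> * 1 \<le> \<gamma> * (\<gamma> - 1)"
    using assms(1) by (intro mult_left_mono) auto
  with assms(1) show ?thesis
    by linarith
next
  case False
  then have "(\<gamma> - 1) * (\<gamma> - 1) \<le> (\<gamma> - 1) * 1"
    using assms(1) by (intro mult_left_mono) auto
  then have "\<gamma> * (\<gamma> - 1)^2 \<le> \<gamma> * (\<gamma> - 1)"
    using assms(1) by (simp add: power2_eq_square)
  with assms(2) show ?thesis
    by simp
qed

lemma stable_opt_nonedge_long:
  assumes "finite V" "metric_on V d" "\<gamma> > 1" "\<gamma> * (\<gamma> - 1)^2 > 1"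
    and "stable_with_opt V T d \<gamma> (W, E)"
    and "{a, b} \<in> E" "c \<in> W" "c \<noteq> a" "{c, a} \<notin> E"
  shows "d a b \<le> (\<gamma> - 1) * d c a"
proof -
  have opt: "steiner_tree V T (W, E)"
    using assms(5) by (rule stable_with_opt_steiner_tree)
  then have tree: "is_tree (W, E)"
    by (simp add: steiner_tree_def)
  have E_edges: "E \<subseteq> edges_on V"
    using opt by (rule steiner_tree_edges_on)
  from assms(6) E_edges have "a \<in> V" "b \<in> V" "a \<noteq> b"
    using edges_onD[of a b V] by blast+
  have "d a b \<ge> 0" "d a b = d b a"
    using assms(2) \<open>a \<in> V\<close> \<open>b \<in> V\<close> unfolding metric_on_def by blast+
  have "E \<subseteq> edges_on W"
    using tree by (simp add: is_tree_iff)
  with assms(6) have "a \<in> W"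
    using edges_onD[of a b W] by blast
  with tree assms(7) have "(c, a) \<in> (adj E)\<^sup>*"
    by (simp add: is_tree_iff)
  from adj_rtrancl_last_edge[OF this assms(8)] obtain x
    where xa: "{x, a} \<in> E" and cx: "(c, x) \<in> (adj (E - {{x, a}}))\<^sup>*"
    by blast
  with E_edges have "x \<in> V" "x \<noteq> a"
    using edges_onD[of x a V] by blast+
  have "{c, a} \<noteq> {x, a}"
    using xa assms(9) by auto
  then have x_short: "\<gamma> * d x a < d c a"
    using stable_exchange_bound[OF assms(1,2) _ assms(5) xa _ cx, of a] assms(3) by simp
  have "\<gamma> - 1 > 0"
    using assms(3) by simp
  show ?thesis
  proof (cases "x = b")
    case True
    with x_short \<open>d a b = d b a\<close> have "\<gamma> * d a b < d c a"
      by simp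
    have "d a b \<le> \<gamma> * (\<gamma> - 1) * d a b"
      using gamma_times_pred_ge_one[OF assms(3,4)] \<open>d a b \<ge> 0\<close>
      by (simp add: mult_le_cancel_right1)
    also have "\<dots> = (\<gamma> - 1) * (\<gamma> * d a b)"
      by (simp add: algebra_simps)
    also have "\<dots> \<le> (\<gamma> - 1) * d c a"
      using \<open>\<gamma> * d a b < d c a\<close> \<open>\<gamma> - 1 > 0\<close> by simp
    finally show ?thesis .
  next
    case False
    then have "{x, a} \<in> E - {{a, b}}" "{x, b} \<noteq> {a, b}"
      using xa \<open>x \<noteq> a\<close> by (auto simp: doubleton_eq_iff)
    then have "(x, a) \<in> (adj (E - {{a, b}}))\<^sup>*" "{x, b} \<noteq> {a, b}"
      by (auto simp: adj_def)
    then have "\<gamma> * d a b < d x b"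
      using stable_exchange_bound[OF assms(1,2) _ assms(5,6)] assms(3) by simp
    moreover have "d x b \<le> d x a + d a b"
      using assms(2) \<open>x \<in> V\<close> \<open>a \<in> V\<close> \<open>b \<in> V\<close> unfolding metric_on_def by blast
    ultimately have "(\<gamma> - 1) * d a b < d x a"
      by (simp add: algebra_simps)
    then have "\<gamma> * ((\<gamma> - 1) * d a b) < \<gamma> * d x a"
      using assms(3) by simp
    with x_short have "\<gamma> * ((\<gamma> - 1) * d a b) < d c a"
      by linarith
    have "d a b \<le> \<gamma> * (\<gamma> - 1)^2 * d a b"
      using assms(4) \<open>d a b \<ge> 0\<close> by (simp add: mult_le_cancel_right1)
    also have "\<dots> = (\<gamma> - 1) * (\<gamma> * ((\<gamma> - 1) * d a b))"
      by (simp add: algebra_simps power2_eq_square)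
    also have "\<dots> \<le> (\<gamma> - 1) * d c a"
      using \<open>\<gamma> * ((\<gamma> - 1) * d a b) < d c a\<close> \<open>\<gamma> - 1 > 0\<close> by simp
    finally show ?thesis .
  qed
qed

theorem mainTheorem4:
  fixes V T :: "'a set" and d :: "'a \<Rightarrow> 'a \<Rightarrow> real" and \<gamma> :: real
    and OPT H :: "'a set \<times> 'a set set" and a b c :: 'a
  assumes "finite V" and "T \<subseteq> V" and "metric_on V d"
    and "\<gamma> > 1" and "\<gamma> * (\<gamma> - 1)^2 > 1"
    and "stable_with_opt V T d \<gamma> OPT"
    and "fst H \<subseteq> fst OPT" and "snd H \<subseteq> snd OPT" and "snd H \<subseteq> edges_on (fst H)"
    and "card (fst H) \<ge> 2"
    and "{a, b} \<in> snd H"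
    and "c \<in> fst OPT - fst H"
  shows "d c a < d a b / (\<gamma> - 1) \<longleftrightarrow> {c, a} \<in> snd OPT"
proof -
  \<comment> \<open>\<open>H\<close> only serves to give \<open>c \<noteq> a\<close> and \<open>c \<noteq> b\<close>.\<close>
  obtain W E where OPT: "OPT = (W, E)"
    by fastforce
  have stable: "stable_with_opt V T d \<gamma> (W, E)"
    using assms(6) OPT by simp
  have ab: "{a, b} \<in> E"
    using assms(8,11) OPT by auto
  from assms(9,11) have "a \<in> fst H" "b \<in> fst H"
    using edges_onD[of a b "fst H"] by blast+
  with assms(12) OPT have "c \<in> W" "c \<noteq> a" "b \<noteq> c"
    by auto
  have "d c a < d a b / (\<gamma> - 1) \<longleftrightarrow> (\<gamma> - 1) * d c a < d a b"
    using assms(4) by (simp add: pos_less_divide_eq mult.commute)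
  moreover have "{c, a} \<in> E \<Longrightarrow> (\<gamma> - 1) * d c a < d a b"
    using stable_opt_edge_short[OF assms(1,3) _ stable _ ab \<open>b \<noteq> c\<close>] assms(4) by simp
  moreover have "{c, a} \<notin> E \<Longrightarrow> d a b \<le> (\<gamma> - 1) * d c a"
    using stable_opt_nonedge_long[OF assms(1,3,4,5) stable ab \<open>c \<in> W\<close> \<open>c \<noteq> a\<close>] by simp
  ultimately show ?thesis
    using OPT by force
qed

end
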